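(* Let $\mathcal F,\mathcal G$ be $\sigma$-fields and $Y,X,\overline X$ random variables. Suppose (i) $Y$ is $\mathcal F$-measurable, (ii) $X$ and $\overline X$ have the same law, (iii) $\overline X$ is independent of $\mathcal F$, and, for some measurable function $\varphi$, (iv) $\varphi(X,Y)$ and $\varphi(\overline X,Y)$ have the same conditional law given $\mathcal F$, and (v) $\varphi(X,Y)$ is conditionally independent of $\mathcal G$ given $\mathcal F$. Let $\mathcal H=\sigma(\mathcal F\cup\mathcal G)$. Then there exists a random variable $\widetilde X$ with the same law as $X$, independent of $\mathcal H$, such that $\varphi(X,Y)$ and $\varphi(\widetilde X,Y)$ have the same conditional law given $\mathcal H$.
   Context: $U$ and $V$ have the same conditional law given a $\sigma$-field $\mathcal F$ if $\mathbb E[\psi(U)\mid\mathcal F]=\mathbb E[\psi(V)\mid\mathcal F]$ a.s. for every non-negative measurable $\psi$. $U$ is conditionally independent of $V$ (or of a $\sigma$-field) given $\mathcal F$ if $\mathbb E[\psi(U)\chi(V)\mid\mathcal F]=\mathbb E[\psi(U)\mid\mathcal F]\mathbb E[\chi(V)\mid\mathcal F]$ a.s. for all non-negative measurable $\psi,\chi$.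
   Formalization: $\widetilde X$ lives on an extension of the probability space by a measure-preserving measurable map, is independent of the pulled-back H, and $\varphi(X,Y)$, $\varphi(\widetilde X,Y)$ (X, Y pulled back) have the same conditional law given it. Each condition added here is assumed in the paper as well or is needed for the statement above to hold. *)

theory Defs
  imports "HOL-Probability.Probability"
begin

definition same_cond_law ::
  "'a measure \<Rightarrow> 'a measure \<Rightarrow> 'd measure \<Rightarrow> ('a \<Rightarrow> 'd) \<Rightarrow> ('a \<Rightarrow> 'd) \<Rightarrow> bool" where
  "same_cond_law M F N U V \<longleftrightarrow>
     (\<forall>\<psi> :: 'd \<Rightarrow> ennreal. \<psi> \<in> borel_measurable N \<longrightarrow>
        (AE x in M. nn_cond_exp M F (\<lambda>\<omega>. \<psi> (U \<omega>)) x = nn_cond_exp M F (\<lambda>\<omega>. \<psi> (V \<omega>)) x))"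

definition cond_indep_sigma ::
  "'a measure \<Rightarrow> 'a measure \<Rightarrow> 'd measure \<Rightarrow> ('a \<Rightarrow> 'd) \<Rightarrow> 'a measure \<Rightarrow> bool" where
  "cond_indep_sigma M F N U G \<longleftrightarrow>
     (\<forall>\<psi> :: 'd \<Rightarrow> ennreal. \<forall>\<eta> :: 'a \<Rightarrow> ennreal.
        \<psi> \<in> borel_measurable N \<longrightarrow> \<eta> \<in> borel_measurable G \<longrightarrow>
        (AE x in M. nn_cond_exp M F (\<lambda>\<omega>. \<psi> (U \<omega>) * \<eta> \<omega>) x =
                    nn_cond_exp M F (\<lambda>\<omega>. \<psi> (U \<omega>)) x * nn_cond_exp M F \<eta> x))"

definition indep_of_sigma ::
  "'a measure \<Rightarrow> 'b measure \<Rightarrow> ('a \<Rightarrow> 'b) \<Rightarrow> 'a measure \<Rightarrow> bool" where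
  "indep_of_sigma M B X F \<longleftrightarrow>
     prob_space.indep_set M {X -` A \<inter> space M | A. A \<in> sets B} (sets F)"

end

theory Submission
  imports Defs
begin

(* Let mu be the law of X and k(c) = integral of psi(phi(x, c)) d mu(x). As Xbar is independent
   of F and Y is F-measurable, E[psi(phi(Xbar, Y)) | F] = k(Y) (freezing), hence by (iv) also
   E[psi(phi(X, Y)) | F] = k(Y). By (v), psi(phi(X, Y)) and k(Y) have equal integrals over the sets
   A \<inter> B with A in F and B in G; these form an intersection-stable generator of H, so for bounded
   psi the conditional expectation given H is k(Y) as well, and monotone convergence removes the
   boundedness. On the product space M \<Otimes> mu the second coordinate Xt is independent of everything
   defined on M, and freezing once more gives E[psi(phi(Xt, Y)) | H] = k(Y). *)

section \<open>Sub-sigma-algebras\<close>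

lemma sigma_sets_Int_eq_sigma_sets_Un:
  assumes "space F = \<Omega>" "space G = \<Omega>"
  shows "sigma_sets \<Omega> {A \<inter> B | A B. A \<in> sets F \<and> B \<in> sets G} = sigma_sets \<Omega> (sets F \<union> sets G)"
proof -
  have FG: "sets F \<union> sets G \<subseteq> Pow \<Omega>"
    using assms sets.space_closed[of F] sets.space_closed[of G] by auto
  interpret sigma_algebra \<Omega> "sigma_sets \<Omega> (sets F \<union> sets G)"
    using FG by (rule sigma_algebra_sigma_sets)
  have "sets F \<union> sets G \<subseteq> {A \<inter> B | A B. A \<in> sets F \<and> B \<in> sets G}"
  proof
    fix C assume "C \<in> sets F \<union> sets G"
    then show "C \<in> {A \<inter> B | A B. A \<in> sets F \<and> B \<in> sets G}"
    proof
      assume "C \<in> sets F"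
      moreover have "C = C \<inter> \<Omega>" "\<Omega> \<in> sets G"
        using \<open>C \<in> sets F\<close> FG sets.top[of G] assms by auto
      ultimately show ?thesis by blast
    next
      assume "C \<in> sets G"
      moreover have "C = \<Omega> \<inter> C" "\<Omega> \<in> sets F"
        using \<open>C \<in> sets G\<close> FG sets.top[of F] assms by auto
      ultimately show ?thesis by blast
    qed
  qed
  then have "sigma_sets \<Omega> (sets F \<union> sets G) \<subseteq> sigma_sets \<Omega> {A \<inter> B | A B. A \<in> sets F \<and> B \<in> sets G}"
    by (rule sigma_sets_mono')
  moreover have "sigma_sets \<Omega> {A \<inter> B | A B. A \<in> sets F \<and> B \<in> sets G} \<subseteq> sigma_sets \<Omega> (sets F \<union> sets G)"
    by (rule sigma_sets_subset) blast
  ultimately show ?thesis by (rule antisym[rotated])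
qed

lemma Int_stable_Int_sets: "Int_stable {A \<inter> B | A B. A \<in> sets F \<and> B \<in> sets G}"
proof (rule Int_stableI)
  fix C D assume "C \<in> {A \<inter> B | A B. A \<in> sets F \<and> B \<in> sets G}" "D \<in> {A \<inter> B | A B. A \<in> sets F \<and> B \<in> sets G}"
  then obtain A B A' B' where "C = A \<inter> B" "D = A' \<inter> B'"
    and "A \<in> sets F" "A' \<in> sets F" "B \<in> sets G" "B' \<in> sets G"
    by blast
  moreover have "C \<inter> D = (A \<inter> A') \<inter> (B \<inter> B')"
    using \<open>C = A \<inter> B\<close> \<open>D = A' \<inter> B'\<close> by blast
  ultimately show "C \<inter> D \<in> {A \<inter> B | A B. A \<in> sets F \<and> B \<in> sets G}"
    by blast
qed

lemma subalgebra_sigma_Un: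
  assumes "subalgebra M F" "subalgebra M G"
  shows "subalgebra M (sigma (space M) (sets F \<union> sets G))"
    and "subalgebra (sigma (space M) (sets F \<union> sets G)) F"
proof -
  have FG_M: "sets F \<union> sets G \<subseteq> sets M"
    using assms by (auto simp: subalgebra_def)
  then have FG_Pow: "sets F \<union> sets G \<subseteq> Pow (space M)"
    using sets.space_closed[of M] by blast
  show "subalgebra M (sigma (space M) (sets F \<union> sets G))"
    unfolding subalgebra_def using FG_Pow FG_M by (simp add: sets.sigma_sets_subset)
  show "subalgebra (sigma (space M) (sets F \<union> sets G)) F"
    unfolding subalgebra_def using FG_Pow assms(1) by (auto simp: subalgebra_def)
qed

lemma vimage_algebra_sigma_Un:
  assumes "space F = \<Omega>'" "space G = \<Omega>'" "\<pi> \<in> \<Omega> \<rightarrow> \<Omega>'"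
  shows "vimage_algebra \<Omega> \<pi> (sigma \<Omega>' (sets F \<union> sets G))
       = sigma \<Omega> (sets (vimage_algebra \<Omega> \<pi> F) \<union> sets (vimage_algebra \<Omega> \<pi> G))"
proof -
  have "sets F \<union> sets G \<subseteq> Pow \<Omega>'"
    using assms(1,2) sets.space_closed[of F] sets.space_closed[of G] by blast
  then have "vimage_algebra \<Omega> \<pi> (sigma \<Omega>' (sets F \<union> sets G)) = sigma \<Omega> {\<pi> -` A \<inter> \<Omega> | A. A \<in> sets F \<union> sets G}"
    using assms(3) by (rule vimage_algebra_sigma)
  also have "{\<pi> -` A \<inter> \<Omega> | A. A \<in> sets F \<union> sets G}
           = sets (vimage_algebra \<Omega> \<pi> F) \<union> sets (vimage_algebra \<Omega> \<pi> G)"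
    using assms by (auto simp: sets_vimage_algebra2)
  finally show ?thesis .
qed

lemma subalgebra_vimage_algebra:
  assumes "\<pi> \<in> M' \<rightarrow>\<^sub>M M" "subalgebra M H"
  shows "subalgebra M' (vimage_algebra (space M') \<pi> H)"
proof -
  have "\<pi> \<in> M' \<rightarrow>\<^sub>M H"
    using assms by (auto simp: subalgebra_def measurable_def)
  then show ?thesis
    unfolding subalgebra_def by (simp add: sets_image_in_sets)
qed

lemma measurable_ident_subalgebra: "subalgebra M F \<Longrightarrow> (\<lambda>x. x) \<in> M \<rightarrow>\<^sub>M F"
  unfolding subalgebra_def by (auto simp: measurable_def dest: sets.sets_into_space)

lemma set_nn_integral_eq_sigma_sets:
  assumes "Int_stable E" "E \<subseteq> Pow (space M)" "space M \<in> E"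
    and sigma_E: "sigma_sets (space M) E \<subseteq> sets M"
    and [measurable]: "f \<in> borel_measurable M" "g \<in> borel_measurable M"
    and finite: "(\<integral>\<^sup>+x. f x \<partial>M) \<noteq> \<infinity>"
    and eq: "\<And>A. A \<in> E \<Longrightarrow> (\<integral>\<^sup>+x\<in>A. f x \<partial>M) = (\<integral>\<^sup>+x\<in>A. g x \<partial>M)"
    and S: "S \<in> sigma_sets (space M) E"
  shows "(\<integral>\<^sup>+x\<in>S. f x \<partial>M) = (\<integral>\<^sup>+x\<in>S. g x \<partial>M)"
proof -
  define H where "H = sigma (space M) E"
  have sets_H: "sets H = sigma_sets (space M) E" and space_H: "space H = space M"
    unfolding H_def using \<open>E \<subseteq> Pow (space M)\<close> by simp_all
  have sub: "subalgebra (density M h) H" for h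
    unfolding subalgebra_def using sets_H space_H sigma_E by simp
  have emeasure_restr: "emeasure (restr_to_subalg (density M h) H) A = (\<integral>\<^sup>+x\<in>A. h x \<partial>M)"
    if "A \<in> sigma_sets (space M) E" "h \<in> borel_measurable M" for A h
    using that sigma_E by (simp add: emeasure_restr_to_subalg[OF sub] sets_H emeasure_density subsetD)
  have "restr_to_subalg (density M f) H = restr_to_subalg (density M g) H"
  proof (rule measure_eqI_generator_eq[OF \<open>Int_stable E\<close> \<open>E \<subseteq> Pow (space M)\<close>, where A="\<lambda>_. space M"])
    show "emeasure (restr_to_subalg (density M f) H) X = emeasure (restr_to_subalg (density M g) H) X"
      if "X \<in> E" for X
      using that eq by (simp add: emeasure_restr)
    show "emeasure (restr_to_subalg (density M f) H) (space M) \<noteq> \<infinity>"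
      using finite \<open>space M \<in> E\<close> by (simp add: emeasure_restr)
  qed (use \<open>space M \<in> E\<close> in \<open>simp_all add: sets_restr_to_subalg[OF sub] sets_H\<close>)
  with S show ?thesis
    by (metis emeasure_restr \<open>f \<in> borel_measurable M\<close> \<open>g \<in> borel_measurable M\<close>)
qed

section \<open>Conditional expectation\<close>

lemma sigma_finite_subalgebra_if_finite_measure:
  "finite_measure M \<Longrightarrow> subalgebra M F \<Longrightarrow> sigma_finite_subalgebra M F"
  by (simp add: finite_measure_subalgebra_is_sigma_finite finite_measure_subalgebra_def
      finite_measure_subalgebra_axioms_def)

lemma (in sigma_finite_subalgebra) nn_cond_exp_monotone_convergence:
  assumes inc: "incseq f" and [measurable]: "\<And>i. f i \<in> borel_measurable M"
  shows "AE x in M. (SUP i. nn_cond_exp M F (f i) x) = nn_cond_exp M F (\<lambda>x. SUP i. f i x) x"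
proof (rule nn_cond_exp_charact)
  fix A assume [measurable]: "A \<in> sets F"
  then have [measurable]: "A \<in> sets M"
    using subalg by (meson subalgebra_def subsetD)
  have cond_inc: "AE x in M. nn_cond_exp M F (f i) x * indicator A x
                    \<le> nn_cond_exp M F (f (Suc i)) x * indicator A x" for i
    using nn_cond_exp_mono[of "f i" "f (Suc i)"] inc
    by (auto elim!: eventually_mono intro: mult_right_mono simp: incseq_Suc_iff le_fun_def)
  have "(\<integral>\<^sup>+x\<in>A. (SUP i. f i x) \<partial>M) = (SUP i. \<integral>\<^sup>+x. f i x * indicator A x \<partial>M)"
    using inc by (subst nn_integral_monotone_convergence_SUP[symmetric])
      (auto simp: SUP_mult_right_ennreal incseq_def le_fun_def intro: mult_right_mono)
  also have "\<dots> = (SUP i. \<integral>\<^sup>+x. nn_cond_exp M F (f i) x * indicator A x \<partial>M)"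
    using nn_cond_exp_intg[of "indicator A"] by (simp add: mult.commute)
  also have "\<dots> = (\<integral>\<^sup>+x\<in>A. (SUP i. nn_cond_exp M F (f i) x) \<partial>M)"
    using cond_inc by (subst nn_integral_monotone_convergence_SUP_AE[symmetric])
      (auto simp: SUP_mult_right_ennreal)
  finally show "(\<integral>\<^sup>+x\<in>A. (SUP i. f i x) \<partial>M) = (\<integral>\<^sup>+x\<in>A. (SUP i. nn_cond_exp M F (f i) x) \<partial>M)" .
qed auto

lemma same_cond_law_if_bounded:
  assumes "sigma_finite_subalgebra M F" and U[measurable]: "U \<in> M \<rightarrow>\<^sub>M N" and V[measurable]: "V \<in> M \<rightarrow>\<^sub>M N"
    and bounded: "\<And>\<psi> n. \<psi> \<in> borel_measurable N \<Longrightarrow> (\<And>d. \<psi> d \<le> of_nat n) \<Longrightarrow>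
      AE x in M. nn_cond_exp M F (\<lambda>\<omega>. \<psi> (U \<omega>)) x = nn_cond_exp M F (\<lambda>\<omega>. \<psi> (V \<omega>)) x"
  shows "same_cond_law M F N U V"
  unfolding same_cond_law_def
proof (intro allI impI)
  interpret sigma_finite_subalgebra M F by fact
  fix \<psi> :: "_ \<Rightarrow> ennreal" assume [measurable]: "\<psi> \<in> borel_measurable N"
  define \<psi>n where "\<psi>n n d = min (\<psi> d) (of_nat n)" for n d
  have [measurable]: "\<psi>n n \<in> borel_measurable N" for n
    unfolding \<psi>n_def by measurable
  have SUP_\<psi>n: "(SUP n. \<psi>n n d) = \<psi> d" for d
    unfolding \<psi>n_def by (simp flip: inf_min add: inf_SUP[symmetric] ennreal_SUP_of_nat_eq_top)
  have SUP_cond: "AE x in M. (SUP n. nn_cond_exp M F (\<lambda>\<omega>. \<psi>n n (W \<omega>)) x) = nn_cond_exp M F (\<lambda>\<omega>. \<psi> (W \<omega>)) x"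
    if [measurable]: "W \<in> M \<rightarrow>\<^sub>M N" for W
  proof -
    have "incseq (\<lambda>n \<omega>. \<psi>n n (W \<omega>))"
      unfolding incseq_def le_fun_def \<psi>n_def by (intro allI impI min.mono) simp_all
    from nn_cond_exp_monotone_convergence[OF this] show ?thesis by (simp add: SUP_\<psi>n)
  qed
  have "AE x in M. nn_cond_exp M F (\<lambda>\<omega>. \<psi>n n (U \<omega>)) x = nn_cond_exp M F (\<lambda>\<omega>. \<psi>n n (V \<omega>)) x" for n
    by (rule bounded[of _ n]) (auto simp: \<psi>n_def)
  then have "AE x in M. \<forall>n. nn_cond_exp M F (\<lambda>\<omega>. \<psi>n n (U \<omega>)) x = nn_cond_exp M F (\<lambda>\<omega>. \<psi>n n (V \<omega>)) x"
    unfolding AE_all_countable ..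
  with SUP_cond[OF U] SUP_cond[OF V]
  show "AE x in M. nn_cond_exp M F (\<lambda>\<omega>. \<psi> (U \<omega>)) x = nn_cond_exp M F (\<lambda>\<omega>. \<psi> (V \<omega>)) x"
    by eventually_elim simp
qed

lemma finite_measure_if_measure_preserving:
  assumes "finite_measure M" "\<pi> \<in> M' \<rightarrow>\<^sub>M M" "distr M' M \<pi> = M"
  shows "finite_measure M'"
proof (rule finite_measureI)
  have "emeasure M' (space M') = emeasure M' (\<pi> -` space M \<inter> space M')"
    using measurable_space[OF \<open>\<pi> \<in> M' \<rightarrow>\<^sub>M M\<close>] by (metis Int_absorb1 Int_commute subset_vimage_iff)
  also have "\<dots> = emeasure M (space M)"
    by (subst (2) assms(3)[symmetric], subst emeasure_distr) (simp_all add: assms(2))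
  finally show "emeasure M' (space M') \<noteq> \<infinity>"
    using \<open>finite_measure M\<close> by (simp add: finite_measure.emeasure_finite)
qed

lemma nn_cond_exp_vimage_algebra:
  assumes "finite_measure M" "subalgebra M H"
    and [measurable]: "\<pi> \<in> M' \<rightarrow>\<^sub>M M" "f \<in> borel_measurable M"
    and preserving: "distr M' M \<pi> = M"
  shows "AE \<omega> in M'. nn_cond_exp M H f (\<pi> \<omega>) = nn_cond_exp M' (vimage_algebra (space M') \<pi> H) (\<lambda>\<omega>. f (\<pi> \<omega>)) \<omega>"
proof -
  define V where "V = vimage_algebra (space M') \<pi> H"
  interpret H: sigma_finite_subalgebra M H
    using assms(1,2) by (rule sigma_finite_subalgebra_if_finite_measure)
  have \<pi>_space: "\<pi> \<in> space M' \<rightarrow> space H"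
    using measurable_space[OF \<open>\<pi> \<in> M' \<rightarrow>\<^sub>M M\<close>] H.subalg by (auto simp: subalgebra_def)
  have sets_V: "sets V = {\<pi> -` A \<inter> space M' | A. A \<in> sets H}"
    unfolding V_def using \<pi>_space by (rule sets_vimage_algebra2)
  have H_M: "A \<in> sets H \<Longrightarrow> A \<in> sets M" for A
    using H.subalg by (auto simp: subalgebra_def)
  have "subalgebra M' V"
    unfolding V_def using \<open>\<pi> \<in> M' \<rightarrow>\<^sub>M M\<close> H.subalg by (rule subalgebra_vimage_algebra)
  moreover have "finite_measure M'"
    using assms(1,3,5) by (rule finite_measure_if_measure_preserving)
  ultimately interpret V: sigma_finite_subalgebra M' V
    by (simp add: sigma_finite_subalgebra_if_finite_measure)
  have set_integral_\<pi>: "(\<integral>\<^sup>+\<omega>\<in>\<pi> -` A \<inter> space M'. h (\<pi> \<omega>) \<partial>M') = (\<integral>\<^sup>+x\<in>A. h x \<partial>M)"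
    if "A \<in> sets M" "h \<in> borel_measurable M" for A h
  proof -
    have "(\<integral>\<^sup>+\<omega>\<in>\<pi> -` A \<inter> space M'. h (\<pi> \<omega>) \<partial>M') = (\<integral>\<^sup>+\<omega>. h (\<pi> \<omega>) * indicator A (\<pi> \<omega>) \<partial>M')"
      by (intro nn_integral_cong) (simp split: split_indicator)
    also have "\<dots> = (\<integral>\<^sup>+x\<in>A. h x \<partial>distr M' M \<pi>)"
      using that by (subst nn_integral_distr) simp_all
    finally show ?thesis
      by (simp add: preserving)
  qed
  show ?thesis
    unfolding V_def[symmetric]
  proof (rule V.nn_cond_exp_charact)
    fix S assume "S \<in> sets V"
    then obtain A where A: "A \<in> sets H" and S: "S = \<pi> -` A \<inter> space M'"
      unfolding sets_V by blast
    have "(\<integral>\<^sup>+x\<in>A. f x \<partial>M) = (\<integral>\<^sup>+x. indicator A x * nn_cond_exp M H f x \<partial>M)"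
      using A by (simp add: H.nn_cond_exp_intg mult.commute)
    then show "(\<integral>\<^sup>+\<omega>\<in>S. f (\<pi> \<omega>) \<partial>M') = (\<integral>\<^sup>+\<omega>\<in>S. nn_cond_exp M H f (\<pi> \<omega>) \<partial>M')"
      using A H_M[OF A] unfolding S by (simp add: set_integral_\<pi> mult.commute)
  next
    show "(\<lambda>\<omega>. nn_cond_exp M H f (\<pi> \<omega>)) \<in> borel_measurable V"
      unfolding V_def using \<pi>_space
      by (intro measurable_compose[OF measurable_vimage_algebra1]) simp_all
  qed simp
qed

lemma set_nn_integral_Int_eq_if_cond_indep:
  assumes "prob_space M" "subalgebra M F" "subalgebra M G"
    and [measurable]: "U \<in> M \<rightarrow>\<^sub>M N" "\<psi> \<in> borel_measurable N" "A \<in> sets F"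
    and B: "B \<in> sets G"
    and cond_indep: "cond_indep_sigma M F N U G"
  shows "(\<integral>\<^sup>+\<omega>\<in>A \<inter> B. \<psi> (U \<omega>) \<partial>M) = (\<integral>\<^sup>+\<omega>\<in>A \<inter> B. nn_cond_exp M F (\<lambda>\<omega>. \<psi> (U \<omega>)) \<omega> \<partial>M)"
proof -
  interpret prob_space M by fact
  interpret F: sigma_finite_subalgebra M F
    using \<open>subalgebra M F\<close> by (simp add: sigma_finite_subalgebra_if_finite_measure)
  have [measurable]: "B \<in> sets M"
    using B \<open>subalgebra M G\<close> by (auto simp: subalgebra_def)
  have "AE \<omega> in M. nn_cond_exp M F (\<lambda>\<omega>. \<psi> (U \<omega>) * indicator B \<omega>) \<omega>
                = nn_cond_exp M F (\<lambda>\<omega>. \<psi> (U \<omega>)) \<omega> * nn_cond_exp M F (indicator B) \<omega>"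
    using cond_indep B unfolding cond_indep_sigma_def by simp
  then have "(\<integral>\<^sup>+\<omega>. indicator A \<omega> * nn_cond_exp M F (\<lambda>\<omega>. \<psi> (U \<omega>) * indicator B \<omega>) \<omega> \<partial>M)
           = (\<integral>\<^sup>+\<omega>. (indicator A \<omega> * nn_cond_exp M F (\<lambda>\<omega>. \<psi> (U \<omega>)) \<omega>) * nn_cond_exp M F (indicator B) \<omega> \<partial>M)"
    by (intro nn_integral_cong_AE) (auto simp: ac_simps)
  then have "(\<integral>\<^sup>+\<omega>. indicator A \<omega> * (\<psi> (U \<omega>) * indicator B \<omega>) \<partial>M)
           = (\<integral>\<^sup>+\<omega>. (indicator A \<omega> * nn_cond_exp M F (\<lambda>\<omega>. \<psi> (U \<omega>)) \<omega>) * indicator B \<omega> \<partial>M)"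
    by (simp add: F.nn_cond_exp_intg)
  then show ?thesis
    by (simp add: indicator_inter_arith ac_simps)
qed

lemma nn_cond_exp_sigma_Un_eq_if_cond_indep:
  assumes "prob_space M" "subalgebra M F" "subalgebra M G"
    and [measurable]: "U \<in> M \<rightarrow>\<^sub>M N" "\<psi> \<in> borel_measurable N"
    and finite: "(\<integral>\<^sup>+\<omega>. \<psi> (U \<omega>) \<partial>M) \<noteq> \<infinity>"
    and cond_indep: "cond_indep_sigma M F N U G"
  shows "AE \<omega> in M. nn_cond_exp M F (\<lambda>\<omega>. \<psi> (U \<omega>)) \<omega>
                    = nn_cond_exp M (sigma (space M) (sets F \<union> sets G)) (\<lambda>\<omega>. \<psi> (U \<omega>)) \<omega>"
proof -
  interpret prob_space M by fact
  define H where "H = sigma (space M) (sets F \<union> sets G)"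
  define E where "E = {A \<inter> B | A B. A \<in> sets F \<and> B \<in> sets G}"
  have space_FG: "space F = space M" "space G = space M"
    using \<open>subalgebra M F\<close> \<open>subalgebra M G\<close> by (simp_all add: subalgebra_def)
  have H: "subalgebra M H" "subalgebra H F"
    unfolding H_def using assms(2,3) by (rule subalgebra_sigma_Un)+
  then interpret H: sigma_finite_subalgebra M H
    by (simp add: sigma_finite_subalgebra_if_finite_measure)
  have "sets F \<union> sets G \<subseteq> Pow (space M)"
    using sets.space_closed[of F] sets.space_closed[of G] space_FG by auto
  then have sets_H: "sets H = sigma_sets (space M) E"
    unfolding H_def E_def using space_FG by (simp add: sigma_sets_Int_eq_sigma_sets_Un)
  then have E_M: "sigma_sets (space M) E \<subseteq> sets M"
    using H(1) by (simp add: subalgebra_def)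
  then have E_Pow: "E \<subseteq> Pow (space M)"
    using sets.space_closed[of M] by blast
  have space_E: "space M \<in> E"
    using sets.top[of F] sets.top[of G] space_FG unfolding E_def by blast
  have eq_E: "(\<integral>\<^sup>+\<omega>\<in>C. \<psi> (U \<omega>) \<partial>M) = (\<integral>\<^sup>+\<omega>\<in>C. nn_cond_exp M F (\<lambda>\<omega>. \<psi> (U \<omega>)) \<omega> \<partial>M)"
    if "C \<in> E" for C
  proof -
    from that obtain A B where C: "C = A \<inter> B" and "A \<in> sets F" "B \<in> sets G"
      unfolding E_def by blast
    from set_nn_integral_Int_eq_if_cond_indep[OF assms(1-5) this(2,3) cond_indep] show ?thesis
      unfolding C .
  qed
  from H(2) have [measurable]: "nn_cond_exp M F (\<lambda>\<omega>. \<psi> (U \<omega>)) \<in> borel_measurable H"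
    by (rule measurable_from_subalg) measurable
  show ?thesis
    unfolding H_def[symmetric]
  proof (rule H.nn_cond_exp_charact)
    fix S assume "S \<in> sets H"
    then show "(\<integral>\<^sup>+\<omega>\<in>S. \<psi> (U \<omega>) \<partial>M) = (\<integral>\<^sup>+\<omega>\<in>S. nn_cond_exp M F (\<lambda>\<omega>. \<psi> (U \<omega>)) \<omega> \<partial>M)"
      unfolding sets_H using Int_stable_Int_sets[of F G, folded E_def] E_Pow space_E E_M _ _ finite eq_E
      by (rule set_nn_integral_eq_sigma_sets[rotated 8]) measurable
  qed measurable
qed

section \<open>Independence\<close>

lemma pair_prob_spaceI: "prob_space M \<Longrightarrow> prob_space N \<Longrightarrow> pair_prob_space M N"
  by (simp add: pair_prob_space_def pair_sigma_finite_def prob_space_imp_sigma_finite)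

lemma distr_pair_ident_if_indep_of_sigma:
  assumes "prob_space M" "subalgebra M F" and [measurable]: "X \<in> M \<rightarrow>\<^sub>M B"
    and indep: "indep_of_sigma M B X F"
  shows "distr M (B \<Otimes>\<^sub>M F) (\<lambda>\<omega>. (X \<omega>, \<omega>)) = distr M B X \<Otimes>\<^sub>M distr M F (\<lambda>\<omega>. \<omega>)"
proof (rule pair_measure_eqI[symmetric])
  interpret prob_space M by fact
  have [measurable]: "(\<lambda>\<omega>. \<omega>) \<in> M \<rightarrow>\<^sub>M F"
    using \<open>subalgebra M F\<close> by (rule measurable_ident_subalgebra)
  interpret X: prob_space "distr M B X" by (rule prob_space_distr) simp
  interpret F: prob_space "distr M F (\<lambda>\<omega>. \<omega>)" by (rule prob_space_distr) simp
  show "sigma_finite_measure (distr M B X)" "sigma_finite_measure (distr M F (\<lambda>\<omega>. \<omega>))"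
    by unfold_locales
  show "sets (distr M B X \<Otimes>\<^sub>M distr M F (\<lambda>\<omega>. \<omega>)) = sets (distr M (B \<Otimes>\<^sub>M F) (\<lambda>\<omega>. (X \<omega>, \<omega>)))"
    by (simp cong: sets_pair_measure_cong)
  fix A E assume "A \<in> sets (distr M B X)" "E \<in> sets (distr M F (\<lambda>\<omega>. \<omega>))"
  then have [measurable]: "A \<in> sets B" "E \<in> sets F" by simp_all
  then have [measurable]: "E \<in> sets M"
    using \<open>subalgebra M F\<close> by (auto simp: subalgebra_def)
  have "prob ((X -` A \<inter> space M) \<inter> E) = prob (X -` A \<inter> space M) * prob E"
    using indep \<open>A \<in> sets B\<close> \<open>E \<in> sets F\<close> unfolding indep_of_sigma_def indep_sets2_eq by blast
  moreover have "(\<lambda>\<omega>. (X \<omega>, \<omega>)) -` (A \<times> E) \<inter> space M = (X -` A \<inter> space M) \<inter> E"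
    by auto
  ultimately show "emeasure (distr M B X) A * emeasure (distr M F (\<lambda>\<omega>. \<omega>)) E
                 = emeasure (distr M (B \<Otimes>\<^sub>M F) (\<lambda>\<omega>. (X \<omega>, \<omega>))) (A \<times> E)"
    by (simp add: emeasure_distr emeasure_eq_measure ennreal_mult'' Int_absorb1 sets.sets_into_space)
qed

lemma nn_cond_exp_indep_of_sigma:
  assumes "prob_space M" "subalgebra M F"
    and [measurable]: "X \<in> M \<rightarrow>\<^sub>M B" "Z \<in> F \<rightarrow>\<^sub>M C" "f \<in> borel_measurable (B \<Otimes>\<^sub>M C)"
    and indep: "indep_of_sigma M B X F"
  shows "AE \<omega> in M. (\<integral>\<^sup>+x. f (x, Z \<omega>) \<partial>distr M B X) = nn_cond_exp M F (\<lambda>\<omega>. f (X \<omega>, Z \<omega>)) \<omega>"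
proof -
  interpret prob_space M by fact
  interpret sigma_finite_subalgebra M F
    using \<open>subalgebra M F\<close> by (simp add: sigma_finite_subalgebra_if_finite_measure)
  let ?\<mu> = "distr M B X" and ?MF = "distr M F (\<lambda>\<omega>. \<omega>)"
  interpret X: prob_space ?\<mu> by (rule prob_space_distr) simp
  interpret F: prob_space ?MF by (rule prob_space_distr) (rule measurable_ident_subalgebra[OF subalg])
  interpret pair_sigma_finite ?\<mu> ?MF by unfold_locales
  have [measurable]: "(\<lambda>\<omega>. \<omega>) \<in> M \<rightarrow>\<^sub>M F" "Z \<in> M \<rightarrow>\<^sub>M C"
    using subalg by (auto intro: measurable_ident_subalgebra measurable_from_subalg)
  show ?thesis
  proof (rule nn_cond_exp_charact)
    fix A assume [measurable]: "A \<in> sets F"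
    have "(\<integral>\<^sup>+\<omega>\<in>A. f (X \<omega>, Z \<omega>) \<partial>M)
        = (\<integral>\<^sup>+p. f (fst p, Z (snd p)) * indicator A (snd p) \<partial>distr M (B \<Otimes>\<^sub>M F) (\<lambda>\<omega>. (X \<omega>, \<omega>)))"
      by (subst nn_integral_distr) simp_all
    also have "\<dots> = (\<integral>\<^sup>+p. f (fst p, Z (snd p)) * indicator A (snd p) \<partial>(?\<mu> \<Otimes>\<^sub>M ?MF))"
      by (simp add: distr_pair_ident_if_indep_of_sigma[OF assms(1-3) indep])
    also have "\<dots> = (\<integral>\<^sup>+\<omega>. (\<integral>\<^sup>+x. f (x, Z \<omega>) \<partial>?\<mu>) * indicator A \<omega> \<partial>?MF)"
      by (subst nn_integral_snd[symmetric]) (auto intro!: nn_integral_cong nn_integral_multc)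
    also have "\<dots> = (\<integral>\<^sup>+\<omega>\<in>A. (\<integral>\<^sup>+x. f (x, Z \<omega>) \<partial>?\<mu>) \<partial>M)"
      by (subst nn_integral_distr) simp_all
    finally show "(\<integral>\<^sup>+\<omega>\<in>A. f (X \<omega>, Z \<omega>) \<partial>M) = (\<integral>\<^sup>+\<omega>\<in>A. (\<integral>\<^sup>+x. f (x, Z \<omega>) \<partial>?\<mu>) \<partial>M)" .
  qed measurable
qed

lemma (in pair_prob_space) distr_pair_snd: "distr (M1 \<Otimes>\<^sub>M M2) M2 snd = M2"
proof (rule measure_eqI)
  fix A assume "A \<in> sets (distr (M1 \<Otimes>\<^sub>M M2) M2 snd)"
  then have A: "A \<in> sets M2" by simp
  then have "snd -` A \<inter> space (M1 \<Otimes>\<^sub>M M2) = space M1 \<times> A"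
    using sets.sets_into_space by (auto simp: space_pair_measure)
  with A show "emeasure (distr (M1 \<Otimes>\<^sub>M M2) M2 snd) A = emeasure M2 A"
    by (simp add: emeasure_distr M2.emeasure_pair_measure_Times M1.emeasure_space_1)
qed simp

lemma indep_of_sigma_snd_vimage_fst:
  assumes "prob_space M" "prob_space N" "subalgebra M H"
  shows "indep_of_sigma (M \<Otimes>\<^sub>M N) N snd (vimage_algebra (space (M \<Otimes>\<^sub>M N)) fst H)"
proof -
  interpret pair_prob_space M N
    using assms(1,2) by (rule pair_prob_spaceI)
  have fst_space: "fst \<in> space (M \<Otimes>\<^sub>M N) \<rightarrow> space H"
    using \<open>subalgebra M H\<close> by (auto simp: subalgebra_def space_pair_measure)
  have H_M: "E \<in> sets H \<Longrightarrow> E \<in> sets M" for E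
    using \<open>subalgebra M H\<close> by (auto simp: subalgebra_def)
  have snd_set: "snd -` A \<inter> space (M \<Otimes>\<^sub>M N) = space M \<times> A" if "A \<in> sets N" for A
    using sets.sets_into_space[OF that] by (auto simp: space_pair_measure)
  have fst_set: "fst -` E \<inter> space (M \<Otimes>\<^sub>M N) = E \<times> space N" if "E \<in> sets M" for E
    using sets.sets_into_space[OF that] by (auto simp: space_pair_measure)
  have prob_Times: "P.prob (E \<times> A) = measure M E * measure N A" if "E \<in> sets M" "A \<in> sets N" for E A
    using that by (simp add: measure_def M2.emeasure_pair_measure_Times enn2real_mult)
  show ?thesis
    unfolding indep_of_sigma_def P.indep_sets2_eq sets_vimage_algebra2[OF fst_space]
  proof safe
    fix A E assume "A \<in> sets N" "E \<in> sets H"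
    with H_M[of E] show "P.prob (snd -` A \<inter> space (M \<Otimes>\<^sub>M N) \<inter> (fst -` E \<inter> space (M \<Otimes>\<^sub>M N)))
        = P.prob (snd -` A \<inter> space (M \<Otimes>\<^sub>M N)) * P.prob (fst -` E \<inter> space (M \<Otimes>\<^sub>M N))"
      by (simp add: snd_set fst_set Times_Int_Times prob_Times M1.prob_space M2.prob_space)
  qed (auto dest: H_M)
qed

section \<open>Resampling\<close>

lemma same_cond_law_resample_product:
  assumes "prob_space M" "prob_space \<mu>" "subalgebra M H"
    and [measurable]: "U \<in> M \<rightarrow>\<^sub>M D" "Y \<in> H \<rightarrow>\<^sub>M C" "\<phi> \<in> \<mu> \<Otimes>\<^sub>M C \<rightarrow>\<^sub>M D"
    and kernel: "\<And>\<psi> n. \<psi> \<in> borel_measurable D \<Longrightarrow> (\<And>d. \<psi> d \<le> of_nat n) \<Longrightarrow>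
      AE \<omega> in M. (\<integral>\<^sup>+x. \<psi> (\<phi> (x, Y \<omega>)) \<partial>\<mu>) = nn_cond_exp M H (\<lambda>\<omega>. \<psi> (U \<omega>)) \<omega>"
  shows "same_cond_law (M \<Otimes>\<^sub>M \<mu>) (vimage_algebra (space (M \<Otimes>\<^sub>M \<mu>)) fst H) D
           (\<lambda>\<omega>. U (fst \<omega>)) (\<lambda>\<omega>. \<phi> (snd \<omega>, Y (fst \<omega>)))"
proof -
  interpret pair_prob_space M \<mu>
    using assms(1,2) by (rule pair_prob_spaceI)
  define V where "V = vimage_algebra (space (M \<Otimes>\<^sub>M \<mu>)) fst H"
  have "subalgebra (M \<Otimes>\<^sub>M \<mu>) V"
    unfolding V_def using measurable_fst \<open>subalgebra M H\<close> by (rule subalgebra_vimage_algebra)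
  have [measurable]: "Y \<in> M \<rightarrow>\<^sub>M C"
    using \<open>subalgebra M H\<close> by (rule measurable_from_subalg) simp
  have [measurable]: "(\<lambda>\<omega>. Y (fst \<omega>)) \<in> V \<rightarrow>\<^sub>M C"
    unfolding V_def using \<open>subalgebra M H\<close>
    by (intro measurable_compose[OF measurable_vimage_algebra1]) (auto simp: subalgebra_def space_pair_measure)
  show ?thesis
    unfolding V_def[symmetric]
  proof (rule same_cond_law_if_bounded)
    show "sigma_finite_subalgebra (M \<Otimes>\<^sub>M \<mu>) V"
      using P.finite_measure \<open>subalgebra (M \<Otimes>\<^sub>M \<mu>) V\<close> by (rule sigma_finite_subalgebra_if_finite_measure)
    fix \<psi> :: "_ \<Rightarrow> ennreal" and n :: nat
    assume [measurable]: "\<psi> \<in> borel_measurable D" and "\<And>d. \<psi> d \<le> of_nat n"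
    have "AE \<omega> in distr (M \<Otimes>\<^sub>M \<mu>) M fst.
        (\<integral>\<^sup>+x. \<psi> (\<phi> (x, Y \<omega>)) \<partial>\<mu>) = nn_cond_exp M H (\<lambda>\<omega>. \<psi> (U \<omega>)) \<omega>"
      unfolding M2.distr_pair_fst by (rule kernel) fact+
    then have "AE \<omega> in M \<Otimes>\<^sub>M \<mu>.
        (\<integral>\<^sup>+x. \<psi> (\<phi> (x, Y (fst \<omega>))) \<partial>\<mu>) = nn_cond_exp M H (\<lambda>\<omega>. \<psi> (U \<omega>)) (fst \<omega>)"
      by (rule AE_distrD[OF measurable_fst])
    moreover have "AE \<omega> in M \<Otimes>\<^sub>M \<mu>.
        nn_cond_exp M H (\<lambda>\<omega>. \<psi> (U \<omega>)) (fst \<omega>) = nn_cond_exp (M \<Otimes>\<^sub>M \<mu>) V (\<lambda>\<omega>. \<psi> (U (fst \<omega>))) \<omega>"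
      unfolding V_def using M1.finite_measure \<open>subalgebra M H\<close> measurable_fst _ M2.distr_pair_fst
      by (rule nn_cond_exp_vimage_algebra) measurable
    moreover have "AE \<omega> in M \<Otimes>\<^sub>M \<mu>.
        (\<integral>\<^sup>+x. \<psi> (\<phi> (x, Y (fst \<omega>))) \<partial>distr (M \<Otimes>\<^sub>M \<mu>) \<mu> snd)
          = nn_cond_exp (M \<Otimes>\<^sub>M \<mu>) V (\<lambda>\<omega>. \<psi> (\<phi> (snd \<omega>, Y (fst \<omega>)))) \<omega>"
      using P.prob_space_axioms \<open>subalgebra (M \<Otimes>\<^sub>M \<mu>) V\<close> _ _ _
        indep_of_sigma_snd_vimage_fst[OF assms(1-3), folded V_def]
      by (rule nn_cond_exp_indep_of_sigma) measurable
    ultimately show "AE \<omega> in M \<Otimes>\<^sub>M \<mu>. nn_cond_exp (M \<Otimes>\<^sub>M \<mu>) V (\<lambda>\<omega>. \<psi> (U (fst \<omega>))) \<omega>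
        = nn_cond_exp (M \<Otimes>\<^sub>M \<mu>) V (\<lambda>\<omega>. \<psi> (\<phi> (snd \<omega>, Y (fst \<omega>)))) \<omega>"
      by eventually_elim (simp add: distr_pair_snd)
  qed measurable
qed

lemma nn_cond_exp_sigma_Un_eq_kernel:
  assumes "prob_space M" "subalgebra M F" "subalgebra M G"
    and [measurable]: "X \<in> M \<rightarrow>\<^sub>M B" "Xbar \<in> M \<rightarrow>\<^sub>M B" "\<phi> \<in> B \<Otimes>\<^sub>M C \<rightarrow>\<^sub>M D"
      "Y \<in> F \<rightarrow>\<^sub>M C" "\<psi> \<in> borel_measurable D"
    and bounded: "\<And>d. \<psi> d \<le> of_nat n"
    and same_law: "distr M B X = distr M B Xbar"
    and Xbar_indep: "indep_of_sigma M B Xbar F"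
    and cond_law: "same_cond_law M F D (\<lambda>\<omega>. \<phi> (X \<omega>, Y \<omega>)) (\<lambda>\<omega>. \<phi> (Xbar \<omega>, Y \<omega>))"
    and cond_indep: "cond_indep_sigma M F D (\<lambda>\<omega>. \<phi> (X \<omega>, Y \<omega>)) G"
  shows "AE \<omega> in M. (\<integral>\<^sup>+x. \<psi> (\<phi> (x, Y \<omega>)) \<partial>distr M B X)
                  = nn_cond_exp M (sigma (space M) (sets F \<union> sets G)) (\<lambda>\<omega>. \<psi> (\<phi> (X \<omega>, Y \<omega>))) \<omega>"
proof -
  interpret prob_space M by fact
  have [measurable]: "Y \<in> M \<rightarrow>\<^sub>M C"
    using \<open>subalgebra M F\<close> by (rule measurable_from_subalg) simp
  have "(\<integral>\<^sup>+\<omega>. \<psi> (\<phi> (X \<omega>, Y \<omega>)) \<partial>M) \<le> (\<integral>\<^sup>+\<omega>. of_nat n \<partial>M)"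
    using bounded by (intro nn_integral_mono) simp
  then have finite: "(\<integral>\<^sup>+\<omega>. \<psi> (\<phi> (X \<omega>, Y \<omega>)) \<partial>M) \<noteq> \<infinity>"
    by (auto simp: emeasure_space_1 top_unique)
  have "AE \<omega> in M. (\<integral>\<^sup>+x. \<psi> (\<phi> (x, Y \<omega>)) \<partial>distr M B Xbar)
                  = nn_cond_exp M F (\<lambda>\<omega>. \<psi> (\<phi> (Xbar \<omega>, Y \<omega>))) \<omega>"
    using assms(1,2) _ _ _ Xbar_indep by (rule nn_cond_exp_indep_of_sigma) measurable
  moreover have "AE \<omega> in M. nn_cond_exp M F (\<lambda>\<omega>. \<psi> (\<phi> (X \<omega>, Y \<omega>))) \<omega>
                          = nn_cond_exp M F (\<lambda>\<omega>. \<psi> (\<phi> (Xbar \<omega>, Y \<omega>))) \<omega>"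
    using cond_law unfolding same_cond_law_def by simp
  moreover have "AE \<omega> in M. nn_cond_exp M F (\<lambda>\<omega>. \<psi> (\<phi> (X \<omega>, Y \<omega>))) \<omega>
      = nn_cond_exp M (sigma (space M) (sets F \<union> sets G)) (\<lambda>\<omega>. \<psi> (\<phi> (X \<omega>, Y \<omega>))) \<omega>"
    using assms(1-3) _ _ finite cond_indep by (rule nn_cond_exp_sigma_Un_eq_if_cond_indep) measurable
  ultimately show ?thesis
    by eventually_elim (simp add: same_law)
qed

theorem lemma4:
  fixes M :: "'a measure" and F G :: "'a measure"
    and B :: "'b measure" and C :: "'c measure" and D :: "'d measure"
    and X Xbar :: "'a \<Rightarrow> 'b" and Y :: "'a \<Rightarrow> 'c" and \<phi> :: "'b \<times> 'c \<Rightarrow> 'd"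
  assumes "prob_space M"
    and "subalgebra M F" and "subalgebra M G"
    and "X \<in> M \<rightarrow>\<^sub>M B" and "Xbar \<in> M \<rightarrow>\<^sub>M B" and "Y \<in> M \<rightarrow>\<^sub>M C"
    and "\<phi> \<in> B \<Otimes>\<^sub>M C \<rightarrow>\<^sub>M D"
    and Y_F: "Y \<in> F \<rightarrow>\<^sub>M C"
    and same_law: "distr M B X = distr M B Xbar"
    and Xbar_indep: "indep_of_sigma M B Xbar F"
    and cond_law: "same_cond_law M F D (\<lambda>\<omega>. \<phi> (X \<omega>, Y \<omega>)) (\<lambda>\<omega>. \<phi> (Xbar \<omega>, Y \<omega>))"
    and cond_indep: "cond_indep_sigma M F D (\<lambda>\<omega>. \<phi> (X \<omega>, Y \<omega>)) G"
  shows "\<exists>(M' :: ('a \<times> 'b) measure) (\<pi> :: 'a \<times> 'b \<Rightarrow> 'a) (Xt :: 'a \<times> 'b \<Rightarrow> 'b).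
           prob_space M' \<and> \<pi> \<in> M' \<rightarrow>\<^sub>M M \<and> distr M' M \<pi> = M \<and>
           Xt \<in> M' \<rightarrow>\<^sub>M B \<and>
           (let F' = vimage_algebra (space M') \<pi> F;
                G' = vimage_algebra (space M') \<pi> G;
                H' = sigma (space M') (sets F' \<union> sets G')
            in distr M' B Xt = distr M B X \<and>
               indep_of_sigma M' B Xt H' \<and>
               same_cond_law M' H' D (\<lambda>\<omega>. \<phi> (X (\<pi> \<omega>), Y (\<pi> \<omega>)))
                                     (\<lambda>\<omega>. \<phi> (Xt \<omega>, Y (\<pi> \<omega>))))"
proof -
  let ?\<mu> = "distr M B X" and ?H = "sigma (space M) (sets F \<union> sets G)"
  interpret pair_prob_space M ?\<mu>
    using assms(1,4) by (intro pair_prob_spaceI prob_space.prob_space_distr)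
  have H: "subalgebra M ?H" "subalgebra ?H F"
    using assms(2,3) by (rule subalgebra_sigma_Un)+
  have H': "sigma (space (M \<Otimes>\<^sub>M ?\<mu>)) (sets (vimage_algebra (space (M \<Otimes>\<^sub>M ?\<mu>)) fst F)
                \<union> sets (vimage_algebra (space (M \<Otimes>\<^sub>M ?\<mu>)) fst G))
          = vimage_algebra (space (M \<Otimes>\<^sub>M ?\<mu>)) fst ?H"
    using assms(2,3) by (intro vimage_algebra_sigma_Un[symmetric]) (auto simp: subalgebra_def space_pair_measure)
  have "indep_of_sigma (M \<Otimes>\<^sub>M ?\<mu>) ?\<mu> snd (vimage_algebra (space (M \<Otimes>\<^sub>M ?\<mu>)) fst ?H)"
    using M1.prob_space_axioms M2.prob_space_axioms H(1) by (rule indep_of_sigma_snd_vimage_fst)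
  moreover have "same_cond_law (M \<Otimes>\<^sub>M ?\<mu>) (vimage_algebra (space (M \<Otimes>\<^sub>M ?\<mu>)) fst ?H) D
      (\<lambda>\<omega>. \<phi> (X (fst \<omega>), Y (fst \<omega>))) (\<lambda>\<omega>. \<phi> (snd \<omega>, Y (fst \<omega>)))"
    using M1.prob_space_axioms M2.prob_space_axioms H(1) _ measurable_from_subalg[OF H(2) Y_F]
  proof (rule same_cond_law_resample_product)
    show "\<phi> \<in> ?\<mu> \<Otimes>\<^sub>M C \<rightarrow>\<^sub>M D" "(\<lambda>\<omega>. \<phi> (X \<omega>, Y \<omega>)) \<in> M \<rightarrow>\<^sub>M D"
      using assms(4,6,7) by (simp_all cong: measurable_cong_sets sets_pair_measure_cong)
  qed (rule nn_cond_exp_sigma_Un_eq_kernel[OF assms(1-5,7) Y_F _ _ same_law Xbar_indep cond_law cond_indep])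
  moreover have "distr (M \<Otimes>\<^sub>M ?\<mu>) B snd = ?\<mu>"
    using distr_pair_snd by (simp cong: distr_cong)
  ultimately show ?thesis
    using assms(4)
    by (intro exI[of _ "M \<Otimes>\<^sub>M ?\<mu>"] exI[of _ fst] exI[of _ snd])
      (simp add: Let_def H' P.prob_space_axioms M2.distr_pair_fst indep_of_sigma_def)
qed

end
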